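(* Let $\mathcal{R}$ be a right amenable cell space with finite stabiliser $G_0$, and let $(\mathcal{R},Q,N,\delta)$ be a semi-cellular automaton with $Q$ finite and nonempty and $N$ finite, whose global transition function $\Delta$ is not surjective. Then there is a Garden of Eden pattern with nonempty finite domain, i.e. a nonempty finite $F\subseteq M$ and $p\colon F\to Q$ such that $\Delta(c)|_F\neq p$ for every $c\in Q^M$.
   Context: A cell space $\mathcal{R}$ consists of a group $G$ acting transitively on the left on a nonempty set $M$ via $\triangleright$, a point $m_0\in M$ and a family $(g_{m_0,m})_{m\in M}$ in $G$ with $g_{m_0,m}\triangleright m_0=m$. $G_0$ is the stabiliser of $m_0$, $G/G_0$ the set of left cosets, with $G$ acting by $g\cdot hG_0=ghG_0$. The right semi-action $\triangleleft\colon M\times G/G_0\to M$ is $m\triangleleft gG_0=g_{m_0,m}g\triangleright m_0$. $\mathcal{R}$ is right amenable if there is a finitely additive probability measure $\mu$ on the power set of $M$ such that $\mu(\{a\triangleleft\mathfrak{g}:a\in A\})=\mu(A)$ whenever $\mathfrak{g}\in G/G_0$, $A\subseteq M$ and $m\mapsto m\triangleleft\mathfrak{g}$ is injective on $A$. A semi-cellular automaton is $(\mathcal{R},Q,N,\delta)$ with $Q$ a set, $N\subseteq G/G_0$ with $G_0\cdot N\subseteq N$, $\delta\colon Q^N\to Q$; its global transition function is $\Delta(c)(m)=\delta(n\mapsto c(m\triangleleft n))$. *)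

theory Defs
  imports Complex_Main "HOL-Algebra.Group_Action" "HOL-Library.FuncSet"
begin

definition cell_space ::
  "('g, 'b) monoid_scheme \<Rightarrow> 'm set \<Rightarrow> ('g \<Rightarrow> 'm \<Rightarrow> 'm) \<Rightarrow> 'm \<Rightarrow> ('m \<Rightarrow> 'g) \<Rightarrow> bool" where
  "cell_space G M act m0 gm \<longleftrightarrow>
     transitive_action G M act \<and> m0 \<in> M \<and>
     (\<forall>m\<in>M. gm m \<in> carrier G \<and> act (gm m) m0 = m)"

definition stab0 :: "('g, 'b) monoid_scheme \<Rightarrow> ('g \<Rightarrow> 'm \<Rightarrow> 'm) \<Rightarrow> 'm \<Rightarrow> 'g set" where
  "stab0 G act m0 = stabilizer G act m0"

definition left_cosets :: "('g, 'b) monoid_scheme \<Rightarrow> 'g set \<Rightarrow> 'g set set" where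
  "left_cosets G H = {g <#\<^bsub>G\<^esub> H | g. g \<in> carrier G}"

definition coset_act :: "('g, 'b) monoid_scheme \<Rightarrow> 'g \<Rightarrow> 'g set \<Rightarrow> 'g set" where
  "coset_act G g C = g <#\<^bsub>G\<^esub> C"

text \<open>Right semi-action m \<triangleleft> gG0 = g_{m0,m} g \<triangleright> m0 (independent of the representative g).\<close>
definition rsemi ::
  "('g, 'b) monoid_scheme \<Rightarrow> ('g \<Rightarrow> 'm \<Rightarrow> 'm) \<Rightarrow> 'm \<Rightarrow> ('m \<Rightarrow> 'g) \<Rightarrow> 'm \<Rightarrow> 'g set \<Rightarrow> 'm" where
  "rsemi G act m0 gm m C =
     act (gm m \<otimes>\<^bsub>G\<^esub> (SOME g. g \<in> carrier G \<and> C = g <#\<^bsub>G\<^esub> stab0 G act m0)) m0"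

definition right_amenable ::
  "('g, 'b) monoid_scheme \<Rightarrow> 'm set \<Rightarrow> ('g \<Rightarrow> 'm \<Rightarrow> 'm) \<Rightarrow> 'm \<Rightarrow> ('m \<Rightarrow> 'g) \<Rightarrow> bool" where
  "right_amenable G M act m0 gm \<longleftrightarrow>
     (\<exists>\<mu> :: 'm set \<Rightarrow> real.
        (\<forall>A. A \<subseteq> M \<longrightarrow> 0 \<le> \<mu> A) \<and>
        \<mu> M = 1 \<and>
        (\<forall>A B. A \<subseteq> M \<longrightarrow> B \<subseteq> M \<longrightarrow> A \<inter> B = {} \<longrightarrow> \<mu> (A \<union> B) = \<mu> A + \<mu> B) \<and>
        (\<forall>C \<in> left_cosets G (stab0 G act m0). \<forall>A. A \<subseteq> M \<longrightarrow>
            inj_on (\<lambda>m. rsemi G act m0 gm m C) A \<longrightarrow>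
            \<mu> ((\<lambda>a. rsemi G act m0 gm a C) ` A) = \<mu> A))"

text \<open>Semi-cellular automaton (R, Q, N, delta); configurations and local maps are
  extensional functions on their domains.\<close>
definition semi_cellular_automaton ::
  "('g, 'b) monoid_scheme \<Rightarrow> 'm set \<Rightarrow> ('g \<Rightarrow> 'm \<Rightarrow> 'm) \<Rightarrow> 'm \<Rightarrow> ('m \<Rightarrow> 'g)
    \<Rightarrow> 'q set \<Rightarrow> 'g set set \<Rightarrow> (('g set \<Rightarrow> 'q) \<Rightarrow> 'q) \<Rightarrow> bool" where
  "semi_cellular_automaton G M act m0 gm Q N \<delta> \<longleftrightarrow>
     cell_space G M act m0 gm \<and>
     N \<subseteq> left_cosets G (stab0 G act m0) \<and>
     (\<forall>g0 \<in> stab0 G act m0. \<forall>n \<in> N. coset_act G g0 n \<in> N) \<and>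
     (\<forall>f \<in> N \<rightarrow>\<^sub>E Q. \<delta> f \<in> Q)"

definition global_trans ::
  "('g, 'b) monoid_scheme \<Rightarrow> 'm set \<Rightarrow> ('g \<Rightarrow> 'm \<Rightarrow> 'm) \<Rightarrow> 'm \<Rightarrow> ('m \<Rightarrow> 'g)
    \<Rightarrow> 'g set set \<Rightarrow> (('g set \<Rightarrow> 'q) \<Rightarrow> 'q) \<Rightarrow> ('m \<Rightarrow> 'q) \<Rightarrow> ('m \<Rightarrow> 'q)" where
  "global_trans G M act m0 gm N \<delta> c =
     (\<lambda>m\<in>M. \<delta> (\<lambda>n\<in>N. c (rsemi G act m0 gm m n)))"

end

theory Submission
  imports Defs "HOL-Analysis.T1_Spaces"
begin

text \<open>Configurations Q^M form a compact space (Tychonoff, Q finite and discrete), and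
  each cell of \<Delta>(c) depends only on the finitely many cells m \<triangleleft> n, n \<in> N, of c. Hence for
  fixed d the sets {c. \<Delta>(c)(m) = d(m)} are closed; if every finite pattern of d were realised
  by some \<Delta>(c), they would have the finite intersection property and a common point c would
  satisfy \<Delta>(c) = d.\<close>

lemma rsemi_in_space:
  assumes "cell_space G M act m0 gm" and "m \<in> M"
    and "n \<in> left_cosets G (stab0 G act m0)"
  shows "rsemi G act m0 gm m n \<in> M"
proof -
  have ta: "transitive_action G M act" and "m0 \<in> M" and "gm m \<in> carrier G"
    using assms(1,2) unfolding cell_space_def by auto
  then interpret transitive_action G M act by simp
  obtain g where g: "g \<in> carrier G" "n = g <#\<^bsub>G\<^esub> stab0 G act m0"
    using assms(3) unfolding left_cosets_def by auto
  let ?s = "SOME g. g \<in> carrier G \<and> n = g <#\<^bsub>G\<^esub> stab0 G act m0"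
  have "?s \<in> carrier G"
    using someI[of "\<lambda>g. g \<in> carrier G \<and> n = g <#\<^bsub>G\<^esub> stab0 G act m0" g] g by blast
  moreover have "group G"
    using ta unfolding transitive_action_def group_action_def group_hom_def by auto
  ultimately have "gm m \<otimes>\<^bsub>G\<^esub> ?s \<in> carrier G"
    using \<open>gm m \<in> carrier G\<close> by (simp add: group.is_monoid monoid.m_closed)
  then show ?thesis unfolding rsemi_def using \<open>m0 \<in> M\<close> element_image by blast
qed

lemma closedin_finitely_determined:
  assumes "finite N" and "finite Q" and "\<sigma> ` N \<subseteq> M"
  shows "closedin (product_topology (\<lambda>_. discrete_topology Q) M)
           {c \<in> M \<rightarrow>\<^sub>E Q. P (\<lambda>n\<in>N. c (\<sigma> n))}"
proof -
  let ?X = "product_topology (\<lambda>_. discrete_topology Q) M"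
  let ?Y = "product_topology (\<lambda>_. discrete_topology Q) N"
  let ?P = "{f \<in> N \<rightarrow>\<^sub>E Q. P f}"
  have "finite ?P"
    using finite_PiE[OF assms(1), of "\<lambda>_. Q"] assms(2) by (auto intro: finite_subset)
  moreover have "t1_space ?Y"
    unfolding t1_space_product_topology by (simp add: Hausdorff_imp_t1_space)
  ultimately have closed_P: "closedin ?Y ?P"
    unfolding t1_space_closedin_finite by auto
  have cont: "continuous_map ?X ?Y (\<lambda>c. \<lambda>n\<in>N. c (\<sigma> n))"
    unfolding continuous_map_componentwise
  proof (intro conjI ballI)
    fix n assume "n \<in> N"
    then have "continuous_map ?X (discrete_topology Q) (\<lambda>c. c (\<sigma> n))"
      using assms(3) by (intro continuous_map_product_projection) auto
    then show "continuous_map ?X (discrete_topology Q) (\<lambda>c. (\<lambda>n\<in>N. c (\<sigma> n)) n)"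
      using \<open>n \<in> N\<close> by simp
  qed auto
  have "{c \<in> M \<rightarrow>\<^sub>E Q. P (\<lambda>n\<in>N. c (\<sigma> n))}
      = {c \<in> topspace ?X. (\<lambda>n\<in>N. c (\<sigma> n)) \<in> ?P}"
    using assms(3) by auto
  then show ?thesis
    using closedin_continuous_map_preimage[OF cont closed_P] by simp
qed

lemma in_image_if_finite_patterns_realised:
  fixes D :: "('m \<Rightarrow> 'q) \<Rightarrow> 'm \<Rightarrow> 'q"
  assumes "finite Q"
    and closed: "\<And>m q. m \<in> M \<Longrightarrow>
           closedin (product_topology (\<lambda>_. discrete_topology Q) M) {c \<in> M \<rightarrow>\<^sub>E Q. D c m = q}"
    and D_PiE: "\<And>c. c \<in> M \<rightarrow>\<^sub>E Q \<Longrightarrow> D c \<in> M \<rightarrow>\<^sub>E Q"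
    and "d \<in> M \<rightarrow>\<^sub>E Q"
    and realised: "\<And>F. F \<subseteq> M \<Longrightarrow> F \<noteq> {} \<Longrightarrow> finite F \<Longrightarrow>
           \<exists>c \<in> M \<rightarrow>\<^sub>E Q. restrict (D c) F = restrict d F"
  shows "d \<in> D ` (M \<rightarrow>\<^sub>E Q)"
proof -
  define K where "K m = {c \<in> M \<rightarrow>\<^sub>E Q. D c m = d m}" for m
  have "compact_space (product_topology (\<lambda>_. discrete_topology Q) M)"
    using assms(1) by (simp add: compact_space_product_topology compact_space_discrete_topology)
  moreover have "\<Inter>\<F> \<noteq> {}" if fin: "finite \<F>" and sub: "\<F> \<subseteq> K ` M" for \<F>
  proof -
    obtain F where F: "F \<subseteq> M" "finite F" "\<F> = K ` F"
      using finite_subset_image[OF fin sub] by blast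
    show ?thesis
    proof (cases "F = {}")
      case False
      then obtain c where c: "c \<in> M \<rightarrow>\<^sub>E Q" and agree: "restrict (D c) F = restrict d F"
        using realised F by blast
      have "c \<in> K m" if "m \<in> F" for m
        using c fun_cong[OF agree, of m] that unfolding K_def by simp
      then show ?thesis using F by blast
    qed (use F in simp)
  qed
  ultimately have "\<Inter>(K ` M) \<noteq> {}"
    using closed unfolding compact_space_fip K_def by (auto simp del: Inter_iff)
  then obtain c where c: "\<And>m. m \<in> M \<Longrightarrow> c \<in> K m" by blast
  show ?thesis
  proof (cases "M = {}")
    case True
    then show ?thesis using assms(4) D_PiE[of "\<lambda>_. undefined"] by auto
  next
    case False
    then have "c \<in> M \<rightarrow>\<^sub>E Q" using c unfolding K_def by auto
    moreover have "D c = d"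
      using c D_PiE[OF \<open>c \<in> M \<rightarrow>\<^sub>E Q\<close>] assms(4) unfolding K_def by (intro PiE_ext) auto
    ultimately show ?thesis by blast
  qed
qed

lemma finite_pattern_outside_image:
  fixes D :: "('m \<Rightarrow> 'q) \<Rightarrow> 'm \<Rightarrow> 'q"
  assumes "finite Q"
    and "\<And>m q. m \<in> M \<Longrightarrow>
           closedin (product_topology (\<lambda>_. discrete_topology Q) M) {c \<in> M \<rightarrow>\<^sub>E Q. D c m = q}"
    and "\<And>c. c \<in> M \<rightarrow>\<^sub>E Q \<Longrightarrow> D c \<in> M \<rightarrow>\<^sub>E Q"
    and "d \<in> M \<rightarrow>\<^sub>E Q" and "d \<notin> D ` (M \<rightarrow>\<^sub>E Q)"
  obtains F where "F \<subseteq> M" "F \<noteq> {}" "finite F"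
    and "\<forall>c \<in> M \<rightarrow>\<^sub>E Q. restrict (D c) F \<noteq> restrict d F"
proof -
  have "\<not> (\<forall>F. F \<subseteq> M \<longrightarrow> F \<noteq> {} \<longrightarrow> finite F \<longrightarrow>
          (\<exists>c \<in> M \<rightarrow>\<^sub>E Q. restrict (D c) F = restrict d F))"
    using in_image_if_finite_patterns_realised[OF assms(1-4)] assms(5) by blast
  then show thesis
    using that by blast
qed

lemma global_trans_in_PiE:
  assumes "semi_cellular_automaton G M act m0 gm Q N \<delta>" and "c \<in> M \<rightarrow>\<^sub>E Q"
  shows "global_trans G M act m0 gm N \<delta> c \<in> M \<rightarrow>\<^sub>E Q"
proof -
  have "(\<lambda>n\<in>N. c (rsemi G act m0 gm m n)) \<in> N \<rightarrow>\<^sub>E Q" if "m \<in> M" for m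
    using assms that rsemi_in_space[of G M act m0 gm m]
    unfolding semi_cellular_automaton_def by auto
  then show ?thesis
    using assms(1) unfolding semi_cellular_automaton_def global_trans_def by auto
qed

lemma closedin_global_trans_cell:
  assumes "semi_cellular_automaton G M act m0 gm Q N \<delta>"
    and "finite N" and "finite Q" and "m \<in> M"
  shows "closedin (product_topology (\<lambda>_. discrete_topology Q) M)
           {c \<in> M \<rightarrow>\<^sub>E Q. global_trans G M act m0 gm N \<delta> c m = q}"
proof -
  have "rsemi G act m0 gm m ` N \<subseteq> M"
    using assms(1,4) rsemi_in_space[of G M act m0 gm m]
    unfolding semi_cellular_automaton_def by auto
  from closedin_finitely_determined[OF assms(2,3) this, of "\<lambda>f. \<delta> f = q"]
  show ?thesis using assms(4) by (simp add: global_trans_def)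
qed

theorem lemma10:
  fixes G :: "('g, 'b) monoid_scheme" and M :: "'m set" and act :: "'g \<Rightarrow> 'm \<Rightarrow> 'm"
    and m0 :: 'm and gm :: "'m \<Rightarrow> 'g"
    and Q :: "'q set" and N :: "'g set set" and \<delta> :: "('g set \<Rightarrow> 'q) \<Rightarrow> 'q"
  assumes "cell_space G M act m0 gm"
    and "right_amenable G M act m0 gm"
    and "finite (stab0 G act m0)"
    and "semi_cellular_automaton G M act m0 gm Q N \<delta>"
    and "finite Q" and "Q \<noteq> {}" and "finite N"
    and "\<not> (global_trans G M act m0 gm N \<delta> ` (M \<rightarrow>\<^sub>E Q) = (M \<rightarrow>\<^sub>E Q))"
  shows "\<exists>F p. F \<subseteq> M \<and> F \<noteq> {} \<and> finite F \<and> p \<in> F \<rightarrow>\<^sub>E Q \<and>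
           (\<forall>c \<in> M \<rightarrow>\<^sub>E Q. restrict (global_trans G M act m0 gm N \<delta> c) F \<noteq> p)"
proof -
  let ?\<Delta> = "global_trans G M act m0 gm N \<delta>"
  have "?\<Delta> ` (M \<rightarrow>\<^sub>E Q) \<subseteq> M \<rightarrow>\<^sub>E Q"
    using global_trans_in_PiE[OF assms(4)] by blast
  then obtain d where d: "d \<in> M \<rightarrow>\<^sub>E Q" "d \<notin> ?\<Delta> ` (M \<rightarrow>\<^sub>E Q)"
    using assms(8) by blast
  obtain F where "F \<subseteq> M" "F \<noteq> {}" "finite F"
    and "\<forall>c \<in> M \<rightarrow>\<^sub>E Q. restrict (?\<Delta> c) F \<noteq> restrict d F"
    using finite_pattern_outside_image[OF assms(5) _ _ d]
      closedin_global_trans_cell[OF assms(4,7,5)] global_trans_in_PiE[OF assms(4)]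
    by blast
  moreover have "restrict d F \<in> F \<rightarrow>\<^sub>E Q"
    using d(1) \<open>F \<subseteq> M\<close> by auto
  ultimately show ?thesis by blast
qed

end
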